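(* Consider a one-parameter quantum channel on $\mathbb{C}^d$ with a fixed pure input state $\rho_0=|\psi_0\rangle\langle\psi_0|$, canonical Kraus operators $\Upsilon_k(\theta)$, output state $\rho_{out}(\theta)$, SLD quantum information $H(\theta)$ of the family $\rho_{out}(\theta)$, and Sarovar–Milburn bound $C_\Upsilon(\theta)=4\sum_k \mathrm{tr}\{\Upsilon_k'(\theta)\rho_0\Upsilon_k'(\theta)^\dagger\}$ (all as defined in the context). Then $H(\theta)\le C_\Upsilon(\theta)$.
   Context: A one-parameter quantum channel is a map $\rho_0\mapsto\sum_k E_k(\theta)\rho_0E_k(\theta)^\dagger$ on density matrices on $\mathbb{C}^d$, with Kraus operators $E_k(\theta)$ depending differentiably on a real parameter $\theta$ and $\sum_k E_k(\theta)^\dagger E_k(\theta)=I$. The input state is a fixed, completely known pure state $\rho_0=|\psi_0\rangle\langle\psi_0|$. The canonical Kraus operators $\{\Upsilon_k(\theta)\}_{k=1}^d$ form a (differentiable) Kraus representation of the same channel satisfying $\mathrm{tr}\{\Upsilon_k(\theta)\rho_0\Upsilon_j(\theta)^\dagger\}=\delta_{jk}p_k(\theta)$ for all $j,k$. The output state is then $\rho_{out}(\theta)=\sum_k p_k(\theta)|w_k(\theta)\rangle\langle w_k(\theta)|$, where $\{|w_k(\theta)\rangle\}_{k=1}^d$ is an orthonormal basis depending differentiably on $\theta$ with $|w_k\rangle=p_k^{-1/2}\Upsilon_k|\psi_0\rangle$ whenever $p_k>0$. A prime denotes $d/d\theta$. The SLD quantum information is $H(\theta)=\mathrm{tr}\{\rho_{out}(\theta)\lambda(\theta)^2\}$,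 where $\lambda(\theta)$ is a self-adjoint solution of $\frac{d\rho_{out}}{d\theta}=\frac12(\rho_{out}\lambda+\lambda\rho_{out})$. *)

theory Defs
  imports "HOL-Analysis.Analysis"
begin

text \<open>Matrices on C^d are complex^'n^'n with d = CARD('n); vectors are complex^'n.\<close>

definition adj :: "complex^'n^'m \<Rightarrow> complex^'m^'n" where
  "adj A = (\<chi> i j. cnj (A $ j $ i))"

definition ket_bra :: "complex^'n \<Rightarrow> complex^'n \<Rightarrow> complex^'n^'n" where
  "ket_bra u v = (\<chi> i j. u $ i * cnj (v $ j))"

definition cinner :: "complex^'n \<Rightarrow> complex^'n \<Rightarrow> complex" where
  "cinner u v = (\<Sum>i\<in>UNIV. cnj (u $ i) * v $ i)"

definition channel :: "('k::finite \<Rightarrow> complex^'n^'n) \<Rightarrow> complex^'n^'n \<Rightarrow> complex^'n^'n" where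
  "channel K rho = (\<Sum>k\<in>UNIV. K k ** rho ** adj (K k))"

end

theory Submission
  imports Defs "HOL-Analysis.Analysis"
begin

text \<open>
  Write \<open>v\<^sub>k(t) = \<Upsilon>\<^sub>k(t) \<psi>\<^sub>0\<close> and \<open>u\<^sub>k = \<Upsilon>\<^sub>k'(\<theta>) \<psi>\<^sub>0\<close>. The function
  \<open>f(t) = Re tr(\<rho>\<^sub>o\<^sub>u\<^sub>t(t) \<lambda>) = \<Sum>\<^sub>k \<langle>v\<^sub>k(t), \<lambda> v\<^sub>k(t)\<rangle>\<close> has derivative \<open>H\<close> at \<open>\<theta>\<close>
  by the SLD equation, and \<open>2 \<Sum>\<^sub>k Re \<langle>\<lambda> v\<^sub>k, u\<^sub>k\<rangle>\<close> by the product rule, while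
  \<open>H = \<Sum>\<^sub>k |\<lambda> v\<^sub>k|\<^sup>2\<close>. Expanding \<open>0 \<le> \<Sum>\<^sub>k |\<lambda> v\<^sub>k - 2 u\<^sub>k|\<^sup>2\<close> gives \<open>H \<le> 4 \<Sum>\<^sub>k |u\<^sub>k|\<^sup>2\<close>.
\<close>

lemma matrix_mul_ket_bra: "A ** ket_bra x y = ket_bra (A *v x) (y::complex^'n)"
  unfolding ket_bra_def matrix_matrix_mult_def matrix_vector_mult_def
  by (simp add: vec_eq_iff sum_distrib_right mult.assoc)

lemma trace_ket_bra_mul: "trace (ket_bra x y ** M) = cinner y (M *v (x::complex^'n))"
proof -
  have "trace (ket_bra x y ** M) = (\<Sum>i\<in>UNIV. \<Sum>j\<in>UNIV. x $ i * cnj (y $ j) * M $ j $ i)"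
    unfolding trace_def ket_bra_def matrix_matrix_mult_def by simp
  also have "\<dots> = (\<Sum>j\<in>UNIV. \<Sum>i\<in>UNIV. x $ i * cnj (y $ j) * M $ j $ i)"
    by (rule sum.swap)
  also have "\<dots> = cinner y (M *v x)"
    unfolding cinner_def matrix_vector_mult_def by (simp add: sum_distrib_left mult_ac)
  finally show ?thesis .
qed

lemma cinner_adj_right: "cinner x (adj B *v y) = cinner (B *v x) (y::complex^'n)"
proof -
  have "cinner x (adj B *v y) = (\<Sum>i\<in>UNIV. \<Sum>j\<in>UNIV. cnj (x $ i) * (cnj (B $ j $ i) * y $ j))"
    unfolding cinner_def adj_def matrix_vector_mult_def by (simp add: sum_distrib_left)
  also have "\<dots> = (\<Sum>j\<in>UNIV. \<Sum>i\<in>UNIV. cnj (x $ i) * (cnj (B $ j $ i) * y $ j))"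
    by (rule sum.swap)
  also have "\<dots> = cinner (B *v x) y"
    unfolding cinner_def matrix_vector_mult_def
    by (simp add: sum_distrib_left sum_distrib_right mult_ac)
  finally show ?thesis .
qed

lemma Re_cinner: "Re (cinner u v) = u \<bullet> (v::complex^'n)"
  unfolding cinner_def inner_vec_def inner_complex_def by simp

lemma inner_selfadj:
  assumes "adj L = L"
  shows "u \<bullet> (L *v v) = (L *v u) \<bullet> (v::complex^'n)"
  using arg_cong[OF cinner_adj_right[of u L v], of Re] by (simp add: assms Re_cinner)

lemma trace_conj_ket_bra:
  fixes A M :: "complex^'n^'n"
  shows "trace (A ** ket_bra x x ** adj A ** M) = cinner (A *v x) (M *v (A *v x))"
proof -
  have "trace (A ** ket_bra x x ** adj A ** M) = trace (ket_bra (A *v x) x ** (adj A ** M))"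
    by (simp only: matrix_mul_ket_bra matrix_mul_assoc)
  also have "\<dots> = cinner x (adj A *v (M *v (A *v x)))"
    by (simp only: trace_ket_bra_mul matrix_vector_mul_assoc[symmetric])
  finally show ?thesis
    by (simp only: cinner_adj_right)
qed

lemma Re_trace_conj_ket_bra:
  fixes A :: "complex^'n^'n"
  shows "Re (trace (A ** ket_bra x x ** adj A)) = (A *v x) \<bullet> (A *v x)"
  using trace_conj_ket_bra[of A x "mat 1"] by (simp add: Re_cinner)

lemma trace_sum_mult_right:
  "trace ((\<Sum>k\<in>S. M k) ** L) = (\<Sum>k\<in>S. trace (M k ** (L::complex^'n^'n)))"
  unfolding trace_def matrix_matrix_mult_def
  by (simp add: sum_distrib_right sum.swap[of _ S])

lemma Re_trace_channel_ket_bra: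
  fixes K :: "'k::finite \<Rightarrow> complex^'n^'n"
  shows "Re (trace (channel K (ket_bra x x) ** M)) = (\<Sum>k\<in>UNIV. (K k *v x) \<bullet> (M *v (K k *v x)))"
  unfolding channel_def trace_sum_mult_right Re_sum trace_conj_ket_bra Re_cinner ..

lemma bounded_linear_Re_trace_mult_right:
  "bounded_linear (\<lambda>M::complex^'n^'n. Re (trace (M ** L)))"
proof -
  have "linear (\<lambda>M::complex^'n^'n. trace (M ** L))"
    by (rule linearI)
      (simp_all add: trace_def matrix_matrix_mult_def distrib_right sum.distrib
        scaleR_conv_of_real[where 'a=complex] sum_distrib_left mult.assoc)
  then show ?thesis
    by (intro bounded_linear_compose[OF bounded_linear_Re]) (simp add: linear_conv_bounded_linear)
qed

lemma bounded_linear_matrix_vector_mult_left: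
  "bounded_linear (\<lambda>M::complex^'n^'m. M *v x)"
proof -
  have "linear (\<lambda>M::complex^'n^'m. M *v x)"
    by (rule linearI)
      (simp_all add: matrix_vector_mult_def vec_eq_iff sum.distrib distrib_left distrib_right
        scaleR_conv_of_real[where 'a=complex] sum_distrib_left mult_ac)
  then show ?thesis
    by (simp add: linear_conv_bounded_linear)
qed

lemma Re_trace_symmetrized_mult:
  "Re (trace (((1/2) *\<^sub>R (R ** L + L ** R)) ** L)) = Re (trace (R ** L ** (L::complex^'n^'n)))"
proof -
  interpret linear "\<lambda>M::complex^'n^'n. Re (trace (M ** L))"
    using bounded_linear_Re_trace_mult_right by (rule bounded_linear.linear)
  have "trace (L ** R ** L) = trace (R ** L ** L)"
    by (metis matrix_mul_assoc trace_mul_sym)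
  then show ?thesis
    by (simp add: scale add)
qed

lemma has_vector_derivative_expectation_selfadj:
  assumes "adj L = L" and "(v has_vector_derivative v') (at t)"
  shows "((\<lambda>s. v s \<bullet> (L *v v s)) has_vector_derivative 2 * ((L *v v t) \<bullet> v')) (at t)"
proof -
  have "((\<lambda>s. L *v v s) has_vector_derivative L *v v') (at t)"
    using bounded_linear.has_vector_derivative[OF matrix_vector_mul_bounded_linear assms(2)] .
  from bounded_bilinear.has_vector_derivative[OF bounded_bilinear_inner assms(2) this]
  moreover have "v t \<bullet> (L *v v') + v' \<bullet> (L *v v t) = 2 * ((L *v v t) \<bullet> v')"
    using inner_selfadj[OF assms(1), of "v t" v'] inner_commute[of v' "L *v v t"] by simp
  ultimately show ?thesis
    by simp
qed

lemma sum_inner_self_le_four_if_cross_eq: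
  fixes a u :: "'k \<Rightarrow> 'a::real_inner"
  assumes "H = (\<Sum>k\<in>S. a k \<bullet> a k)" and "H = (\<Sum>k\<in>S. 2 * (a k \<bullet> u k))"
  shows "H \<le> 4 * (\<Sum>k\<in>S. u k \<bullet> u k)"
proof -
  have expand: "(a k - 2 *\<^sub>R u k) \<bullet> (a k - 2 *\<^sub>R u k)
      = a k \<bullet> a k - 2 * (2 * (a k \<bullet> u k)) + 4 * (u k \<bullet> u k)" for k
    by (simp add: inner_diff_left inner_diff_right inner_commute[of "u k" "a k"])
  have "0 \<le> (\<Sum>k\<in>S. (a k - 2 *\<^sub>R u k) \<bullet> (a k - 2 *\<^sub>R u k))"
    by (simp add: sum_nonneg)
  also have "\<dots> = (\<Sum>k\<in>S. a k \<bullet> a k) - (\<Sum>k\<in>S. 2 * (2 * (a k \<bullet> u k)))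
      + (\<Sum>k\<in>S. 4 * (u k \<bullet> u k))"
    by (simp only: expand sum.distrib sum_subtractf)
  finally show ?thesis
    unfolding sum_distrib_left[symmetric] assms(1)[symmetric]
    using assms(2)[unfolded sum_distrib_left[symmetric]] by linarith
qed

theorem lemma1:
  fixes E :: "'k::finite \<Rightarrow> real \<Rightarrow> complex^'n^'n"
    and Ups Ups' :: "'n \<Rightarrow> real \<Rightarrow> complex^'n^'n"
    and psi0 :: "complex^'n"
    and w :: "'n \<Rightarrow> real \<Rightarrow> complex^'n"
    and L :: "complex^'n^'n"
    and \<theta> :: real
  assumes E_diff: "\<And>k t. E k differentiable (at t)"
    and E_kraus: "\<And>t. (\<Sum>k\<in>UNIV. adj (E k t) ** E k t) = mat 1"
    and Ups_deriv: "\<And>k t. (Ups k has_vector_derivative Ups' k t) (at t)"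
    and same_channel: "\<And>t rho. channel (\<lambda>k. Ups k t) rho = channel (\<lambda>k. E k t) rho"
    and psi0_unit: "norm psi0 = 1"
    and canonical: "\<And>t j k. j \<noteq> k \<Longrightarrow>
          trace (Ups k t ** ket_bra psi0 psi0 ** adj (Ups j t)) = 0"
    and w_orthonormal: "\<And>t j k. cinner (w j t) (w k t) = (if j = k then 1 else 0)"
    and w_diff: "\<And>k t. w k differentiable (at t)"
    and w_def: "\<And>k t. Re (trace (Ups k t ** ket_bra psi0 psi0 ** adj (Ups k t))) > 0 \<Longrightarrow>
          w k t = (1 / sqrt (Re (trace (Ups k t ** ket_bra psi0 psi0 ** adj (Ups k t)))))
                    *\<^sub>R (Ups k t *v psi0)"
    and L_selfadj: "adj L = L"
    and SLD: "((\<lambda>t. channel (\<lambda>k. E k t) (ket_bra psi0 psi0)) has_vector_derivative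
               ((1/2) *\<^sub>R (channel (\<lambda>k. E k \<theta>) (ket_bra psi0 psi0) ** L
                          + L ** channel (\<lambda>k. E k \<theta>) (ket_bra psi0 psi0)))) (at \<theta>)"
  shows "Re (trace (channel (\<lambda>k. E k \<theta>) (ket_bra psi0 psi0) ** L ** L))
         \<le> 4 * Re (\<Sum>k\<in>UNIV. trace (Ups' k \<theta> ** ket_bra psi0 psi0 ** adj (Ups' k \<theta>)))"
proof -
  define H where "H = Re (trace (channel (\<lambda>k. E k \<theta>) (ket_bra psi0 psi0) ** L ** L))"
  define v where "v k t = Ups k t *v psi0" for k t
  define u where "u k = Ups' k \<theta> *v psi0" for k
  define f where "f t = Re (trace (channel (\<lambda>k. E k t) (ket_bra psi0 psi0) ** L))" for t
  have f_Kraus: "f t = (\<Sum>k\<in>UNIV. v k t \<bullet> (L *v v k t))" for t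
    unfolding f_def v_def same_channel[symmetric] Re_trace_channel_ket_bra ..
  have "(f has_vector_derivative H) (at \<theta>)"
    using bounded_linear.has_vector_derivative[OF bounded_linear_Re_trace_mult_right[of L] SLD]
    unfolding f_def H_def Re_trace_symmetrized_mult .
  moreover have "(f has_vector_derivative (\<Sum>k\<in>UNIV. 2 * ((L *v v k \<theta>) \<bullet> u k))) (at \<theta>)"
    unfolding f_Kraus[abs_def] u_def v_def
    by (intro has_vector_derivative_sum has_vector_derivative_expectation_selfadj L_selfadj
        bounded_linear.has_vector_derivative[OF bounded_linear_matrix_vector_mult_left Ups_deriv])
  ultimately have H_cross: "H = (\<Sum>k\<in>UNIV. 2 * ((L *v v k \<theta>) \<bullet> u k))"
    by (rule vector_derivative_unique_at)
  have "H = Re (trace (channel (\<lambda>k. Ups k \<theta>) (ket_bra psi0 psi0) ** (L ** L)))"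
    unfolding H_def same_channel matrix_mul_assoc ..
  also have "\<dots> = (\<Sum>k\<in>UNIV. v k \<theta> \<bullet> (L *v (L *v v k \<theta>)))"
    by (simp only: Re_trace_channel_ket_bra v_def matrix_vector_mul_assoc[symmetric])
  also have "\<dots> = (\<Sum>k\<in>UNIV. (L *v v k \<theta>) \<bullet> (L *v v k \<theta>))"
    by (rule sum.cong[OF refl]) (rule inner_selfadj[OF L_selfadj])
  finally have H_square: "H = (\<Sum>k\<in>UNIV. (L *v v k \<theta>) \<bullet> (L *v v k \<theta>))" .
  have "H \<le> 4 * (\<Sum>k\<in>UNIV. u k \<bullet> u k)"
    using sum_inner_self_le_four_if_cross_eq[OF H_square H_cross] .
  then show ?thesis
    unfolding H_def u_def Re_sum Re_trace_conj_ket_bra .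
qed

end
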